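(* For all $p,\alpha\in(0,1)$ there exists $\varepsilon_0>0$ such that for every $0<\varepsilon\le\varepsilon_0$ there exists $n_0$ such that the following holds. Suppose $G$ is a graph on $n\ge n_0$ vertices in which every vertex has even degree, $G$ is lower-$(p,\varepsilon)$-regular and $\delta(G)\ge\alpha n$. Then there is an orientation $G'$ of $G$ such that $G'$ is Eulerian (i.e. $d^+_{G'}(v)=d^-_{G'}(v)$ for all $v$) and lower-$(p/4,\varepsilon)$-regular.
   Context: For $0<\varepsilon,p<1$, a graph (resp. digraph) $G$ on $n$ vertices is lower-$(p,\varepsilon)$-regular if $e_G(S,T)\ge(p-\varepsilon)|S||T|$ for all disjoint $S,T\subseteq V(G)$ with $|S|,|T|\ge\varepsilon n$, where $e_G(S,T)$ counts edges between $S$ and $T$ (resp. directed from $S$ to $T$). *)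

theory Defs
  imports Complex_Main
begin

definition graph :: "'a set \<Rightarrow> ('a \<Rightarrow> 'a \<Rightarrow> bool) \<Rightarrow> bool" where
  "graph V E \<longleftrightarrow> finite V \<and> (\<forall>u v. E u v \<longrightarrow> u \<in> V \<and> v \<in> V \<and> u \<noteq> v \<and> E v u)"

definition degree :: "'a set \<Rightarrow> ('a \<Rightarrow> 'a \<Rightarrow> bool) \<Rightarrow> 'a \<Rightarrow> nat" where
  "degree V E v = card {u \<in> V. E v u}"

definition out_degree :: "'a set \<Rightarrow> ('a \<Rightarrow> 'a \<Rightarrow> bool) \<Rightarrow> 'a \<Rightarrow> nat" where
  "out_degree V D v = card {u \<in> V. D v u}"

definition in_degree :: "'a set \<Rightarrow> ('a \<Rightarrow> 'a \<Rightarrow> bool) \<Rightarrow> 'a \<Rightarrow> nat" where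
  "in_degree V D v = card {u \<in> V. D u v}"

text \<open>e(S,T): number of pairs (s,t) in S x T with an edge (resp. arc from s to t).
  For disjoint S, T in a graph this counts the edges between S and T.\<close>
definition e_count :: "('a \<Rightarrow> 'a \<Rightarrow> bool) \<Rightarrow> 'a set \<Rightarrow> 'a set \<Rightarrow> nat" where
  "e_count R S T = card {(s, t). s \<in> S \<and> t \<in> T \<and> R s t}"

definition lower_regular :: "'a set \<Rightarrow> ('a \<Rightarrow> 'a \<Rightarrow> bool) \<Rightarrow> real \<Rightarrow> real \<Rightarrow> bool" where
  "lower_regular V R p eps \<longleftrightarrow>
     (\<forall>S T. S \<subseteq> V \<longrightarrow> T \<subseteq> V \<longrightarrow> S \<inter> T = {} \<longrightarrow>
        real (card S) \<ge> eps * real (card V) \<longrightarrow> real (card T) \<ge> eps * real (card V) \<longrightarrow>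
        real (e_count R S T) \<ge> (p - eps) * real (card S) * real (card T))"

definition orientation :: "('a \<Rightarrow> 'a \<Rightarrow> bool) \<Rightarrow> ('a \<Rightarrow> 'a \<Rightarrow> bool) \<Rightarrow> bool" where
  "orientation E D \<longleftrightarrow> (\<forall>u v. (E u v \<longleftrightarrow> D u v \<or> D v u) \<and> \<not> (D u v \<and> D v u))"

end

theory Submission
  imports Defs "HOL-Analysis.Convex"
begin

text \<open>Split the edges of the even graph into edge-disjoint cycles and orient each cycle
  cyclically; reversing any set \<open>F\<close> of these cycles keeps the orientation Eulerian. Let \<open>A\<close> be
  the signed adjacency matrix of the reoriented graph. Cauchy--Schwarz, applied twice, bounds the
  fourth power of every cut sum \<open>\<Sum>s\<in>S. \<Sum>t\<in>T. A s t\<close> by \<open>n\<^sup>4\<close> times the energy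
  \<open>\<Sum>t t'. (\<Sum>s. A s t * A s t')\<^sup>2\<close>. Averaged over all \<open>F\<close>, every term of the energy whose four
  cycle labels do not pair up cancels, and since a vertex has at most two neighbours on any one
  cycle only \<open>O(n\<^sup>3)\<close> terms survive. So for some \<open>F\<close> all cut sums are \<open>O(n^(7/4))\<close>, below
  \<open>p/2 |S||T|\<close> for large \<open>n\<close>, and \<open>2 e\<^sub>D(S,T) = e\<^sub>G(S,T) + \<Sum>s\<in>S. \<Sum>t\<in>T. A s t\<close> gives the claim.\<close>

section \<open>Cycle decompositions of even graphs\<close>

text \<open>For a loopless antisymmetric \<open>c\<close> this says that \<open>c\<close> is the arc set of vertex-disjoint
  directed cycles.\<close>
definition disjoint_cycles :: "'a set \<Rightarrow> ('a \<Rightarrow> 'a \<Rightarrow> bool) \<Rightarrow> bool" where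
  "disjoint_cycles V c \<longleftrightarrow>
     (\<forall>v\<in>V. card {u\<in>V. c v u} \<le> 1 \<and> card {u\<in>V. c u v} = card {u\<in>V. c v u})"

definition cycle_arcs :: "'a list \<Rightarrow> 'a \<Rightarrow> 'a \<Rightarrow> bool" where
  "cycle_arcs ys u v \<longleftrightarrow> (\<exists>i<length ys. u = ys ! i \<and> v = ys ! (Suc i mod length ys))"

lemma Suc_mod_inj:
  fixes i j L :: nat
  assumes "i < L" "j < L" "Suc i mod L = Suc j mod L"
  shows "i = j"
  using assms by (cases "Suc i = L"; cases "Suc j = L") auto

lemma mod_length_less [simp]: "i < length xs \<Longrightarrow> k mod length xs < length xs"
  by (metis mod_less_divisor gr_implies_not0 neq0_conv)

lemma cycle_arcs_out_unique:
  assumes "distinct ys" "cycle_arcs ys u v" "cycle_arcs ys u v'"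
  shows "v = v'"
  using assms unfolding cycle_arcs_def by (auto simp: nth_eq_iff_index_eq)

lemma cycle_arcs_in_unique:
  assumes "distinct ys" "cycle_arcs ys u v" "cycle_arcs ys u' v"
  shows "u = u'"
proof -
  obtain i j where ij: "i < length ys" "j < length ys" "u = ys ! i" "u' = ys ! j"
    and "ys ! (Suc i mod length ys) = ys ! (Suc j mod length ys)"
    using assms(2,3) unfolding cycle_arcs_def by blast
  moreover have "Suc i mod length ys < length ys" "Suc j mod length ys < length ys"
    using ij by simp_all
  ultimately have "Suc i mod length ys = Suc j mod length ys"
    using assms(1) by (simp add: nth_eq_iff_index_eq)
  then show ?thesis using ij Suc_mod_inj by blast
qed

lemma cycle_arcs_antisym:
  assumes "distinct ys" "3 \<le> length ys"
  shows "\<not> (cycle_arcs ys u v \<and> cycle_arcs ys v u)"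
proof
  let ?L = "length ys"
  assume "cycle_arcs ys u v \<and> cycle_arcs ys v u"
  then obtain i j where ij: "i < ?L" "j < ?L"
    and "ys ! j = ys ! (Suc i mod ?L)" "ys ! i = ys ! (Suc j mod ?L)"
    unfolding cycle_arcs_def by blast
  moreover have "Suc i mod ?L < ?L" "Suc j mod ?L < ?L"
    using ij by simp_all
  ultimately have "j = Suc i mod ?L" "i = Suc j mod ?L"
    using assms(1) by (simp_all add: nth_eq_iff_index_eq)
  then have "i = Suc (Suc i) mod ?L" by (metis mod_Suc_eq)
  then show False using ij assms(2) by (cases "Suc (Suc i) < ?L") (auto simp: mod_if split: if_splits)
qed

lemma cycle_arcs_exists_out:
  assumes "v \<in> set ys"
  shows "\<exists>u. cycle_arcs ys v u"
  using assms unfolding cycle_arcs_def in_set_conv_nth by blast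

lemma cycle_arcs_exists_in:
  assumes "v \<in> set ys"
  shows "\<exists>u. cycle_arcs ys u v"
proof -
  let ?L = "length ys"
  obtain i where i: "i < ?L" "v = ys ! i" using assms by (auto simp: in_set_conv_nth)
  have "Suc (i + ?L - 1) = i + ?L" using i by simp
  then have "Suc ((i + ?L - 1) mod ?L) mod ?L = i"
    using i by (simp add: mod_Suc_eq)
  then have "cycle_arcs ys (ys ! ((i + ?L - 1) mod ?L)) v"
    unfolding cycle_arcs_def using i by (intro exI[of _ "(i + ?L - 1) mod ?L"]) auto
  then show ?thesis by blast
qed

lemma cycle_arcs_in_set:
  assumes "cycle_arcs ys u v"
  shows "u \<in> set ys" "v \<in> set ys"
  using assms unfolding cycle_arcs_def by (auto intro!: nth_mem)

lemma card_cycle_arcs_out_le_1: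
  assumes "distinct ys" "finite V"
  shows "card {u\<in>V. cycle_arcs ys v u} \<le> 1"
  using assms(2) cycle_arcs_out_unique[OF assms(1)] by (simp add: card_le_Suc0_iff_eq) blast

lemma card_cycle_arcs_in_le_1:
  assumes "distinct ys" "finite V"
  shows "card {u\<in>V. cycle_arcs ys u v} \<le> 1"
  using assms(2) cycle_arcs_in_unique[OF assms(1)] by (simp add: card_le_Suc0_iff_eq) blast

lemma cycle_arcs_out_empty_iff:
  assumes "set ys \<subseteq> V"
  shows "{u\<in>V. cycle_arcs ys v u} = {} \<longleftrightarrow> v \<notin> set ys"
  using assms cycle_arcs_exists_out[of v ys] cycle_arcs_in_set[of ys v] by blast

lemma cycle_arcs_in_empty_iff:
  assumes "set ys \<subseteq> V"
  shows "{u\<in>V. cycle_arcs ys u v} = {} \<longleftrightarrow> v \<notin> set ys"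
  using assms cycle_arcs_exists_in[of v ys] cycle_arcs_in_set[of ys _ v] by blast

lemma card_eq_if_card_le_1:
  assumes "finite A" "finite B" "card A \<le> 1" "card B \<le> 1" "A = {} \<longleftrightarrow> B = {}"
  shows "card A = card B"
  using assms by (cases "A = {}") (auto simp: le_Suc_eq card_0_eq)

lemma disjoint_cycles_cycle_arcs:
  assumes "distinct ys" "set ys \<subseteq> V" "finite V"
  shows "disjoint_cycles V (cycle_arcs ys)"
  unfolding disjoint_cycles_def
proof
  fix v assume "v \<in> V"
  show "card {u\<in>V. cycle_arcs ys v u} \<le> 1 \<and>
      card {u\<in>V. cycle_arcs ys u v} = card {u\<in>V. cycle_arcs ys v u}"
    using card_cycle_arcs_out_le_1[OF assms(1,3)] card_cycle_arcs_in_le_1[OF assms(1,3)]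
      cycle_arcs_out_empty_iff[OF assms(2)] cycle_arcs_in_empty_iff[OF assms(2)] assms(3)
    by (simp add: card_eq_if_card_le_1)
qed

lemma obtain_longest_path:
  assumes "finite V" "distinct xs\<^sub>0" "set xs\<^sub>0 \<subseteq> V" "successively E xs\<^sub>0"
  obtains xs where "distinct xs" "set xs \<subseteq> V" "successively E xs"
    "\<And>ys. distinct ys \<Longrightarrow> set ys \<subseteq> V \<Longrightarrow> successively E ys \<Longrightarrow> length ys \<le> length xs"
proof -
  let ?path = "\<lambda>xs. distinct xs \<and> set xs \<subseteq> V \<and> successively E xs"
  have "length ys < Suc (card V)" if "?path ys" for ys
  proof -
    have "length ys = card (set ys)" using that by (simp add: distinct_card)
    also have "\<dots> \<le> card V" using that assms(1) by (simp add: card_mono)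
    finally show ?thesis by simp
  qed
  then show thesis
    using that ex_has_greatest_nat[of ?path xs\<^sub>0 length "Suc (card V)"] assms(2-4) by blast
qed

lemma cycle_arcs_take_edge:
  assumes "successively E xs" "j < length xs" "E (xs ! j) (xs ! 0)" "cycle_arcs (take (Suc j) xs) u v"
  shows "E u v"
proof -
  have "length (take (Suc j) xs) = Suc j" using assms(2) by simp
  then obtain i where "i < Suc j" "u = take (Suc j) xs ! i" "v = take (Suc j) xs ! (Suc i mod Suc j)"
    using assms(4) unfolding cycle_arcs_def by auto
  then have i: "i \<le> j" "u = xs ! i" "v = xs ! (Suc i mod Suc j)" by simp_all
  show ?thesis
  proof (cases "i = j")
    case True
    then show ?thesis using i assms(3) by simp
  next
    case False
    then have "Suc i < length xs" "Suc i mod Suc j = Suc i" using i assms(2) by auto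
    then show ?thesis using i successively_nth[of E xs i] assms(1) by simp
  qed
qed

text \<open>A longest path cannot be extended at its first vertex \<open>x\<close>, so all neighbours of \<open>x\<close> lie on
  it; as \<open>x\<close> has even degree it has a neighbour besides its successor, which closes a cycle.\<close>
lemma even_graph_has_cycle:
  assumes g: "graph V E" and even: "\<forall>v\<in>V. even (degree V E v)" and "E u0 v0"
  obtains ys where "distinct ys" "set ys \<subseteq> V" "3 \<le> length ys"
    "\<And>u v. cycle_arcs ys u v \<Longrightarrow> E u v"
proof -
  have fin: "finite V" and gE: "\<And>u v. E u v \<Longrightarrow> u \<in> V \<and> v \<in> V \<and> u \<noteq> v \<and> E v u"
    using g unfolding graph_def by auto
  let ?path = "\<lambda>xs. distinct xs \<and> set xs \<subseteq> V \<and> successively E xs"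
  have path0: "?path [u0, v0]" using gE \<open>E u0 v0\<close> by auto
  obtain xs where path: "?path xs" and longest: "\<And>ys. ?path ys \<Longrightarrow> length ys \<le> length xs"
    using obtain_longest_path[OF fin] path0 by metis
  have len: "2 \<le> length xs" using longest[OF path0] by simp
  define x where "x = xs ! 0"
  have x1: "E x (xs ! 1)" using successively_nth[of E xs 0] path len unfolding x_def by simp
  have on_path: "w \<in> set xs" if "E x w" for w
  proof (rule ccontr)
    assume "w \<notin> set xs"
    moreover have "hd xs = x" using len unfolding x_def by (cases xs) auto
    ultimately have "?path (w # xs)" using path gE[OF that] by (simp add: successively_Cons)
    then show False using longest by fastforce
  qed
  have "\<exists>w. E x w \<and> w \<noteq> xs ! 1"
  proof (rule ccontr)
    assume "\<nexists>w. E x w \<and> w \<noteq> xs ! 1"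
    then have "{u\<in>V. E x u} = {xs ! 1}" using x1 gE[OF x1] by blast
    then have "degree V E x = 1" unfolding degree_def by simp
    then show False using even gE[OF x1] by force
  qed
  then obtain w where "E x w" "w \<noteq> xs ! 1" by blast
  then obtain j where j: "j < length xs" "xs ! j = w"
    using on_path by (meson in_set_conv_nth)
  have "j \<noteq> 0" using j gE[OF \<open>E x w\<close>] unfolding x_def by (metis)
  moreover have "j \<noteq> 1" using j \<open>w \<noteq> xs ! 1\<close> by auto
  ultimately have "2 \<le> j" by simp
  let ?ys = "take (Suc j) xs"
  show thesis
  proof (rule that)
    show "distinct ?ys" using path by simp
    show "set ?ys \<subseteq> V" using path set_take_subset by fastforce
    show "3 \<le> length ?ys" using j \<open>2 \<le> j\<close> by simp
    show "E u v" if "cycle_arcs ?ys u v" for u v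
      using cycle_arcs_take_edge[OF _ j(1) _ that] path gE[OF \<open>E x w\<close>] j(2) unfolding x_def by blast
  qed
qed

text \<open>\<open>cl u v\<close> is the index of the cycle through the edge \<open>uv\<close>, and \<open>R\<close> orients every cycle
  cyclically.\<close>
definition cycle_decomposition ::
    "'a set \<Rightarrow> ('a \<Rightarrow> 'a \<Rightarrow> bool) \<Rightarrow> ('a \<Rightarrow> 'a \<Rightarrow> bool) \<Rightarrow> ('a \<Rightarrow> 'a \<Rightarrow> nat) \<Rightarrow> nat \<Rightarrow> bool" where
  "cycle_decomposition V E R cl m \<longleftrightarrow>
     orientation E R \<and> (\<forall>u v. cl u v = cl v u) \<and> (\<forall>u v. E u v \<longrightarrow> cl u v < m) \<and>
     (\<forall>i. disjoint_cycles V (\<lambda>u v. R u v \<and> cl u v = i))"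

lemma degree_remove_cycles:
  assumes "graph V E" "disjoint_cycles V c" "\<And>u v. c u v \<Longrightarrow> E u v"
    "\<And>u v. \<not> (c u v \<and> c v u)" "v \<in> V"
  shows "degree V E v = degree V (\<lambda>u w. E u w \<and> \<not> c u w \<and> \<not> c w u) v + 2 * card {u\<in>V. c v u}"
proof -
  have fin: "finite V" and sym: "\<And>u w. E u w \<Longrightarrow> E w u" using assms(1) unfolding graph_def by auto
  let ?E' = "\<lambda>u w. E u w \<and> \<not> c u w \<and> \<not> c w u"
  have "{u\<in>V. E v u} = ({u\<in>V. ?E' v u} \<union> {u\<in>V. c v u}) \<union> {u\<in>V. c u v}"
    using assms(3) sym by blast
  moreover have "({u\<in>V. ?E' v u} \<union> {u\<in>V. c v u}) \<inter> {u\<in>V. c u v} = {}"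
    using assms(4) by blast
  moreover have "{u\<in>V. ?E' v u} \<inter> {u\<in>V. c v u} = {}" by blast
  ultimately have "degree V E v = degree V ?E' v + card {u\<in>V. c v u} + card {u\<in>V. c u v}"
    unfolding degree_def using fin by (simp add: card_Un_disjoint)
  then show ?thesis using assms(2,5) unfolding disjoint_cycles_def by simp
qed

lemma cycle_decomposition_empty:
  assumes "\<And>u v. \<not> E u v"
  shows "cycle_decomposition V E (\<lambda>_ _. False) (\<lambda>_ _. 0) 0"
  using assms unfolding cycle_decomposition_def orientation_def disjoint_cycles_def by simp

lemma cycle_decomposition_insert:
  assumes dec: "cycle_decomposition V E' R' cl' m"
    and c: "disjoint_cycles V c" "\<And>u v. \<not> (c u v \<and> c v u)"
    and E: "\<And>u v. E u v \<longleftrightarrow> E' u v \<or> c u v \<or> c v u" "\<And>u v. c u v \<Longrightarrow> \<not> E' u v"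
  shows "cycle_decomposition V E (\<lambda>u v. R' u v \<or> c u v)
    (\<lambda>u v. if c u v \<or> c v u then m else cl' u v) (Suc m)"
proof -
  let ?R = "\<lambda>u v. R' u v \<or> c u v" and ?cl = "\<lambda>u v. if c u v \<or> c v u then m else cl' u v"
  have R': "\<And>u v. E' u v \<longleftrightarrow> R' u v \<or> R' v u" "\<And>u v. \<not> (R' u v \<and> R' v u)"
    and cl': "\<And>u v. cl' u v = cl' v u" "\<And>u v. E' u v \<Longrightarrow> cl' u v < m"
    and cycles': "\<And>i. disjoint_cycles V (\<lambda>u v. R' u v \<and> cl' u v = i)"
    using dec unfolding cycle_decomposition_def orientation_def by blast+
  have "orientation E ?R"
    unfolding orientation_def
  proof (intro allI conjI)
    fix u v
    show "E u v \<longleftrightarrow> ?R u v \<or> ?R v u" using E(1) R'(1) by blast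
    show "\<not> (?R u v \<and> ?R v u)" using R' c(2) E(2) by blast
  qed
  moreover have "\<And>u v. ?cl u v = ?cl v u" using cl'(1) by simp
  moreover have "?cl u v < Suc m" if "E u v" for u v
  proof (cases "c u v \<or> c v u")
    case False
    then have "cl' u v < m" using that E(1) cl'(2) by blast
    with False show ?thesis by simp
  qed simp
  moreover have "disjoint_cycles V (\<lambda>u v. ?R u v \<and> ?cl u v = i)" for i
  proof (cases "i = m")
    case True
    have "(\<lambda>u v. ?R u v \<and> ?cl u v = i) = c"
      using True R'(1) cl'(2) E(2) by (intro ext) (metis less_irrefl)
    then show ?thesis using c(1) by simp
  next
    case False
    have "(\<lambda>u v. ?R u v \<and> ?cl u v = i) = (\<lambda>u v. R' u v \<and> cl' u v = i)"
      using False R'(1) E(2) by (intro ext) metis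
    then show ?thesis using cycles' by simp
  qed
  ultimately show ?thesis unfolding cycle_decomposition_def by blast
qed

lemma card_edges_remove_less:
  assumes "graph V E" "c a b" "\<And>u v. c u v \<Longrightarrow> E u v"
  shows "card {(u, v). E u v \<and> \<not> c u v \<and> \<not> c v u} < card {(u, v). E u v}"
proof (rule psubset_card_mono)
  have "{(u, v). E u v} \<subseteq> V \<times> V" using assms(1) unfolding graph_def by blast
  then show "finite {(u, v). E u v}" using assms(1) finite_subset unfolding graph_def by blast
  show "{(u, v). E u v \<and> \<not> c u v \<and> \<not> c v u} \<subset> {(u, v). E u v}"
    using assms(2,3) by blast
qed

lemma cycle_decomposition_exists:
  assumes "graph V E" "\<forall>v\<in>V. even (degree V E v)"
  shows "\<exists>R cl m. cycle_decomposition V E R cl m"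
  using assms
proof (induction "card {(u, v). E u v}" arbitrary: E rule: less_induct)
  case less
  have fin: "finite V" and gE: "\<And>u v. E u v \<Longrightarrow> u \<in> V \<and> v \<in> V \<and> u \<noteq> v \<and> E v u"
    using less.prems(1) unfolding graph_def by auto
  show ?case
  proof (cases "\<exists>u v. E u v")
    case False
    then have "cycle_decomposition V E (\<lambda>_ _. False) (\<lambda>_ _. 0) 0"
      by (intro cycle_decomposition_empty) blast
    then show ?thesis by blast
  next
    case True
    then obtain ys where ys: "distinct ys" "set ys \<subseteq> V" "3 \<le> length ys"
      and arcs: "\<And>u v. cycle_arcs ys u v \<Longrightarrow> E u v"
      using even_graph_has_cycle[OF less.prems] by blast
    let ?c = "cycle_arcs ys"
    let ?E' = "\<lambda>u v. E u v \<and> \<not> ?c u v \<and> \<not> ?c v u"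
    have cycles: "disjoint_cycles V ?c" using disjoint_cycles_cycle_arcs[OF ys(1,2) fin] .
    have antisym: "\<And>u v. \<not> (?c u v \<and> ?c v u)" using cycle_arcs_antisym[OF ys(1,3)] by blast
    have "graph V ?E'" unfolding graph_def using fin gE by auto
    moreover have "\<forall>v\<in>V. even (degree V ?E' v)"
    proof
      fix v assume "v \<in> V"
      then have "even (degree V E v)" using less.prems(2) by blast
      then show "even (degree V ?E' v)"
        using degree_remove_cycles[OF less.prems(1) cycles arcs antisym \<open>v \<in> V\<close>] by simp
    qed
    moreover have "?c (ys ! 0) (ys ! (Suc 0 mod length ys))"
      using ys(3) unfolding cycle_arcs_def by (intro exI[of _ 0]) auto
    then have "card {(u, v). ?E' u v} < card {(u, v). E u v}"
      using card_edges_remove_less[OF less.prems(1)] arcs by blast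
    ultimately obtain R' cl' m' where "cycle_decomposition V ?E' R' cl' m'"
      using less.hyps by blast
    moreover have "E u v \<longleftrightarrow> ?E' u v \<or> ?c u v \<or> ?c v u" for u v using arcs gE by blast
    ultimately show ?thesis using cycle_decomposition_insert[OF _ cycles antisym] by blast
  qed
qed

lemma cycle_decomposition_balanced:
  assumes dec: "cycle_decomposition V E R cl m" and "finite V" "v \<in> V"
  shows "card {u\<in>V. R v u \<and> cl v u \<in> L} = card {u\<in>V. R u v \<and> cl u v \<in> L}"
proof -
  have E: "\<And>u w. E u w \<longleftrightarrow> R u w \<or> R w u" and bound: "\<And>u w. E u w \<Longrightarrow> cl u w < m"
    and cycles: "\<And>i. disjoint_cycles V (\<lambda>u w. R u w \<and> cl u w = i)"
    using dec unfolding cycle_decomposition_def orientation_def by blast+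
  let ?L = "L \<inter> {..<m}"
  have out: "{u\<in>V. R v u \<and> cl v u \<in> L} = (\<Union>i\<in>?L. {u\<in>V. R v u \<and> cl v u = i})"
    using E bound by blast
  have in': "{u\<in>V. R u v \<and> cl u v \<in> L} = (\<Union>i\<in>?L. {u\<in>V. R u v \<and> cl u v = i})"
    using E bound by blast
  have "card {u\<in>V. R v u \<and> cl v u \<in> L} = (\<Sum>i\<in>?L. card {u\<in>V. R v u \<and> cl v u = i})"
    unfolding out using \<open>finite V\<close> by (intro card_UN_disjoint) auto
  also have "\<dots> = (\<Sum>i\<in>?L. card {u\<in>V. R u v \<and> cl u v = i})"
    using cycles \<open>v \<in> V\<close> unfolding disjoint_cycles_def by simp
  also have "\<dots> = card {u\<in>V. R u v \<and> cl u v \<in> L}"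
    unfolding in' using \<open>finite V\<close> by (intro card_UN_disjoint[symmetric]) auto
  finally show ?thesis .
qed

section \<open>Reversing cycles\<close>

definition reorient :: "('a \<Rightarrow> 'a \<Rightarrow> bool) \<Rightarrow> ('a \<Rightarrow> 'a \<Rightarrow> nat) \<Rightarrow> nat set \<Rightarrow> 'a \<Rightarrow> 'a \<Rightarrow> bool" where
  "reorient R cl F u v \<longleftrightarrow> (if cl u v \<in> F then R v u else R u v)"

lemma orientation_reorient:
  assumes "cycle_decomposition V E R cl m"
  shows "orientation E (reorient R cl F)"
proof -
  have "orientation E R" and sym: "\<And>u v. cl u v = cl v u"
    using assms unfolding cycle_decomposition_def by blast+
  then show ?thesis unfolding orientation_def reorient_def by (metis (full_types))
qed

lemma reorient_out_degree_eq_in_degree: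
  assumes dec: "cycle_decomposition V E R cl m" and "finite V" "v \<in> V"
  shows "out_degree V (reorient R cl F) v = in_degree V (reorient R cl F) v"
proof -
  have antisym: "\<And>u w. \<not> (R u w \<and> R w u)" and sym: "\<And>u w. cl u w = cl w u"
    using dec unfolding cycle_decomposition_def orientation_def by blast+
  let ?A = "\<lambda>L. card {u\<in>V. R v u \<and> cl v u \<in> L}" and ?B = "\<lambda>L. card {u\<in>V. R u v \<and> cl v u \<in> L}"
  have balanced: "?A L = ?B L" for L
    using cycle_decomposition_balanced[OF assms] sym by simp
  have out: "{u\<in>V. reorient R cl F v u} = {u\<in>V. R v u \<and> cl v u \<in> - F} \<union> {u\<in>V. R u v \<and> cl v u \<in> F}"
    unfolding reorient_def by auto
  have in': "{u\<in>V. reorient R cl F u v} = {u\<in>V. R u v \<and> cl v u \<in> - F} \<union> {u\<in>V. R v u \<and> cl v u \<in> F}"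
    unfolding reorient_def using sym by auto
  have "out_degree V (reorient R cl F) v = ?A (- F) + ?B F"
    unfolding out_degree_def out using \<open>finite V\<close> antisym by (intro card_Un_disjoint) auto
  moreover have "in_degree V (reorient R cl F) v = ?B (- F) + ?A F"
    unfolding in_degree_def in' using \<open>finite V\<close> antisym by (intro card_Un_disjoint) auto
  ultimately show ?thesis using balanced[of "- F"] balanced[of F] by linarith
qed

section \<open>Averaging over all reversals\<close>

definition sign_flip :: "'b set \<Rightarrow> 'b \<Rightarrow> real" where
  "sign_flip F i = (if i \<in> F then -1 else 1)"

lemma abs_sign_flip [simp]: "\<bar>sign_flip F i\<bar> = 1"
  by (simp add: sign_flip_def)

lemma prod_sign_flip_toggle:
  "prod_list (map (sign_flip (if x \<in> F then F - {x} else insert x F)) cs) =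
     (-1) ^ count_list cs x * prod_list (map (sign_flip F) cs)"
  by (induction cs) (auto simp: sign_flip_def)

lemma sum_Pow_prod_sign_flip_eq_0:
  assumes "finite L" "x \<in> L" "odd (count_list cs x)"
  shows "(\<Sum>F\<in>Pow L. prod_list (map (sign_flip F) cs)) = 0"
proof -
  let ?g = "\<lambda>F. prod_list (map (sign_flip F) cs)"
  let ?t = "\<lambda>F. if x \<in> F then F - {x} else insert x F"
  have "bij_betw ?t (Pow L) (Pow L)"
    by (rule bij_betw_byWitness[where f' = ?t]) (use \<open>x \<in> L\<close> in auto)
  then have "(\<Sum>F\<in>Pow L. ?g F) = (\<Sum>F\<in>Pow L. ?g (?t F))"
    by (rule sum.reindex_bij_betw[symmetric])
  also have "\<dots> = - (\<Sum>F\<in>Pow L. ?g F)"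
    using \<open>odd (count_list cs x)\<close> by (simp add: prod_sign_flip_toggle sum_negf)
  finally show ?thesis by simp
qed

lemma unpaired_imp_odd_count:
  assumes "\<not> ((a = b \<and> c = d) \<or> (a = c \<and> b = d) \<or> (a = d \<and> b = c))"
  shows "\<exists>x\<in>{a, b, c, d}. odd (count_list [a, b, c, d] x)"
  using assms
  by (cases "a = b"; cases "a = c"; cases "a = d"; cases "b = c"; cases "b = d"; cases "c = d") auto

lemma sum_Pow_sign_flip4_bound:
  assumes "finite L" "a \<in> L" "b \<in> L" "c \<in> L" "d \<in> L"
  shows "\<bar>\<Sum>F\<in>Pow L. sign_flip F a * sign_flip F b * sign_flip F c * sign_flip F d\<bar>
    \<le> 2 ^ card L * of_bool ((a = b \<and> c = d) \<or> (a = c \<and> b = d) \<or> (a = d \<and> b = c))"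
proof (cases "(a = b \<and> c = d) \<or> (a = c \<and> b = d) \<or> (a = d \<and> b = c)")
  case True
  have "\<bar>\<Sum>F\<in>Pow L. sign_flip F a * sign_flip F b * sign_flip F c * sign_flip F d\<bar>
      \<le> (\<Sum>F\<in>Pow L. \<bar>sign_flip F a * sign_flip F b * sign_flip F c * sign_flip F d\<bar>)"
    by (rule sum_abs)
  also have "\<dots> = 2 ^ card L"
    using \<open>finite L\<close> by (simp add: abs_mult card_Pow)
  finally show ?thesis using True by simp
next
  case False
  obtain x where "x \<in> {a, b, c, d}" "odd (count_list [a, b, c, d] x)"
    using unpaired_imp_odd_count[OF False] ..
  then have "(\<Sum>F\<in>Pow L. prod_list (map (sign_flip F) [a, b, c, d])) = 0"
    using assms by (intro sum_Pow_prod_sign_flip_eq_0) auto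
  then show ?thesis by (simp add: mult.assoc)
qed

definition signed_adjacency :: "('a \<Rightarrow> 'a \<Rightarrow> bool) \<Rightarrow> 'a \<Rightarrow> 'a \<Rightarrow> real" where
  "signed_adjacency D u v = of_bool (D u v) - of_bool (D v u)"

definition codegree_energy :: "'a set \<Rightarrow> ('a \<Rightarrow> 'a \<Rightarrow> real) \<Rightarrow> real" where
  "codegree_energy V A = (\<Sum>t\<in>V. \<Sum>t'\<in>V. (\<Sum>s\<in>V. A s t * A s t')\<^sup>2)"

lemma signed_adjacency_reorient:
  assumes "cl u v = cl v u"
  shows "signed_adjacency (reorient R cl F) u v = sign_flip F (cl u v) * signed_adjacency R u v"
  using assms unfolding signed_adjacency_def reorient_def sign_flip_def by simp

lemma abs_signed_adjacency_le_1:
  assumes "orientation E R"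
  shows "\<bar>signed_adjacency R u v\<bar> \<le> 1"
  using assms unfolding signed_adjacency_def orientation_def by auto

lemma signed_adjacency_eq_0:
  assumes "orientation E R" "\<not> E u v"
  shows "signed_adjacency R u v = 0"
  using assms unfolding signed_adjacency_def orientation_def by auto

lemma card_class_neighbours_le_2:
  assumes dec: "cycle_decomposition V E R cl m" and "finite V" "v \<in> V"
  shows "card {u\<in>V. E v u \<and> cl v u = i} \<le> 2"
proof -
  let ?out = "{u\<in>V. R v u \<and> cl v u = i}" and ?in = "{u\<in>V. R u v \<and> cl u v = i}"
  have E: "\<And>u w. E u w \<longleftrightarrow> R u w \<or> R w u" and sym: "\<And>u w. cl u w = cl w u"
    and "disjoint_cycles V (\<lambda>u w. R u w \<and> cl u w = i)"
    using dec unfolding cycle_decomposition_def orientation_def by blast+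
  then have cards: "card ?out \<le> 1 \<and> card ?in = card ?out"
    using \<open>v \<in> V\<close> unfolding disjoint_cycles_def by blast
  have "{u\<in>V. E v u \<and> cl v u = i} \<subseteq> ?out \<union> ?in"
    using E sym by blast
  then have "card {u\<in>V. E v u \<and> cl v u = i} \<le> card (?out \<union> ?in)"
    using \<open>finite V\<close> by (intro card_mono) auto
  also have "\<dots> \<le> card ?out + card ?in" by (rule card_Un_le)
  finally show ?thesis using cards by linarith
qed

lemma one_le_of_bool_sum3: "A \<or> B \<or> C \<Longrightarrow> (1::real) \<le> of_bool A + of_bool B + of_bool C"
  by auto

lemma sum_swap_nested4:
  "(\<Sum>F\<in>P. \<Sum>t\<in>A. \<Sum>t'\<in>A. \<Sum>s\<in>A. \<Sum>s'\<in>A. f F t t' s s') =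
   (\<Sum>t\<in>A. \<Sum>t'\<in>A. \<Sum>s\<in>A. \<Sum>s'\<in>A. \<Sum>F\<in>P. f F t t' s s')"
  by (subst sum.swap, rule sum.cong[OF refl])+ (rule refl)

lemma exists_le_average:
  fixes f :: "'b \<Rightarrow> real"
  assumes "finite A" "A \<noteq> {}" "sum f A \<le> real (card A) * c"
  shows "\<exists>x\<in>A. f x \<le> c"
proof (rule ccontr)
  assume "\<not> (\<exists>x\<in>A. f x \<le> c)"
  then have "(\<Sum>x\<in>A. c) < sum f A" using assms(1,2) by (intro sum_strict_mono) auto
  then show False using assms(3) by simp
qed

context
  fixes V :: "'a set" and E R :: "'a \<Rightarrow> 'a \<Rightarrow> bool" and cl :: "'a \<Rightarrow> 'a \<Rightarrow> nat" and m :: nat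
  assumes fin: "finite V" and dec: "cycle_decomposition V E R cl m"
begin

private lemma E_iff: "E u v \<longleftrightarrow> R u v \<or> R v u"
  and cl_sym: "cl u v = cl v u"
  and cl_less: "E u v \<Longrightarrow> cl u v < m"
  using dec unfolding cycle_decomposition_def orientation_def by blast+

private lemma sum_class_neighbours_le_2:
  assumes "v \<in> V"
  shows "(\<Sum>u\<in>V. of_bool (E v u \<and> cl v u = i)) \<le> (2::real)"
proof -
  have "(\<Sum>u\<in>V. of_bool (E v u \<and> cl v u = i)) = real (card {u\<in>V. E v u \<and> cl v u = i})"
    using fin by (simp add: of_bool_def sum.inter_filter[symmetric])
  also have "\<dots> \<le> 2" using card_class_neighbours_le_2[OF dec fin assms, of i] by simp
  finally show ?thesis .
qed

lemma codegree_energy_reorient: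
  "codegree_energy V (signed_adjacency (reorient R cl F)) =
    (\<Sum>t\<in>V. \<Sum>t'\<in>V. \<Sum>s\<in>V. \<Sum>s'\<in>V.
      (sign_flip F (cl s t) * sign_flip F (cl s t') * sign_flip F (cl s' t) * sign_flip F (cl s' t')) *
      (signed_adjacency R s t * signed_adjacency R s t' * signed_adjacency R s' t * signed_adjacency R s' t'))"
  unfolding codegree_energy_def power2_eq_square sum_product
  by (simp add: signed_adjacency_reorient[where cl = cl, OF cl_sym] algebra_simps)

private lemma of_bool_paired_labels_le:
  assumes edges: "E s t \<and> E s t' \<and> E s' t \<and> E s' t'"
  shows "of_bool ((cl s t = cl s t' \<and> cl s' t = cl s' t') \<or> (cl s t = cl s' t \<and> cl s t' = cl s' t') \<or>
      (cl s t = cl s' t' \<and> cl s t' = cl s' t))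
    \<le> of_bool (E s t' \<and> cl s t' = cl s t) + of_bool (E t s' \<and> cl t s' = cl t s) +
      (of_bool (E t' s' \<and> cl t' s' = cl s t) :: real)"
  (is "of_bool ?paired \<le> ?g")
proof (cases ?paired)
  case True
  have "E t s'" "E t' s'" using edges E_iff by blast+
  consider "cl s t = cl s t'" | "cl s t = cl s' t" | "cl s t = cl s' t'" using True by blast
  then have "(E s t' \<and> cl s t' = cl s t) \<or> (E t s' \<and> cl t s' = cl t s) \<or> (E t' s' \<and> cl t' s' = cl s t)"
  proof cases
    case 1
    then show ?thesis using edges by simp
  next
    case 2
    then show ?thesis using \<open>E t s'\<close> cl_sym[of t s'] cl_sym[of t s] by simp
  next
    case 3
    then show ?thesis using \<open>E t' s'\<close> cl_sym[of t' s'] by simp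
  qed
  then have "1 \<le> ?g" by (rule one_le_of_bool_sum3)
  moreover have "of_bool ?paired = (1::real)" using True by (simp only: of_bool_eq(2))
  ultimately show ?thesis by linarith
next
  case False
  then have "of_bool ?paired = (0::real)" by (simp only: of_bool_eq(1))
  moreover have "0 \<le> ?g" by simp
  ultimately show ?thesis by linarith
qed

text \<open>The three indicators on the right correspond to the three ways in which the four cycle labels
  can pair up.\<close>
private lemma sign_sum_times_adjacency_le:
  "(\<Sum>F\<in>Pow {..<m}. sign_flip F (cl s t) * sign_flip F (cl s t') * sign_flip F (cl s' t) * sign_flip F (cl s' t')) *
    (signed_adjacency R s t * signed_adjacency R s t' * signed_adjacency R s' t * signed_adjacency R s' t')
   \<le> 2 ^ m * (of_bool (E s t' \<and> cl s t' = cl s t) + of_bool (E t s' \<and> cl t s' = cl t s) +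
      of_bool (E t' s' \<and> cl t' s' = cl s t))"
  (is "?W * ?B \<le> 2 ^ m * ?g")
proof (cases "E s t \<and> E s t' \<and> E s' t \<and> E s' t'")
  case False
  have "orientation E R" using dec unfolding cycle_decomposition_def by blast
  then have "?B = 0" using False by (auto simp: signed_adjacency_eq_0)
  then have "?W * ?B = 0" by (simp only: mult_zero_right)
  moreover have "0 \<le> 2 ^ m * ?g" by simp
  ultimately show ?thesis by linarith
next
  case True
  let ?paired = "(cl s t = cl s t' \<and> cl s' t = cl s' t') \<or> (cl s t = cl s' t \<and> cl s t' = cl s' t') \<or>
    (cl s t = cl s' t' \<and> cl s t' = cl s' t)"
  have "orientation E R" using dec unfolding cycle_decomposition_def by blast
  then have B: "\<bar>?B\<bar> \<le> 1"
    unfolding abs_mult using abs_signed_adjacency_le_1 by (intro mult_le_one) auto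
  have W: "\<bar>?W\<bar> \<le> 2 ^ m * of_bool ?paired"
    using sum_Pow_sign_flip4_bound[of "{..<m}"] True cl_less by simp
  have paired_le: "of_bool ?paired \<le> ?g" using True by (rule of_bool_paired_labels_le)
  have "2 ^ m * of_bool ?paired \<le> 2 ^ m * ?g" by (rule mult_left_mono[OF paired_le]) simp
  have "?W * ?B \<le> \<bar>?W\<bar> * \<bar>?B\<bar>" by (simp only: abs_mult[symmetric] abs_ge_self)
  also have "\<dots> \<le> \<bar>?W\<bar>" by (rule mult_left_le[OF B abs_ge_zero])
  also have "\<dots> \<le> 2 ^ m * ?g" using W \<open>2 ^ m * of_bool ?paired \<le> 2 ^ m * ?g\<close> by linarith
  finally show ?thesis .
qed

private lemma sum4_class_neighbour_le:
  assumes "\<And>x y z. x \<in> V \<Longrightarrow> y \<in> V \<Longrightarrow> z \<in> V \<Longrightarrow> c x y z \<in> V"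
  shows "(\<Sum>x\<in>V. \<Sum>y\<in>V. \<Sum>z\<in>V. \<Sum>w\<in>V. of_bool (E (c x y z) w \<and> cl (c x y z) w = f x y z))
    \<le> 2 * real (card V) ^ 3"
proof -
  have "(\<Sum>x\<in>V. \<Sum>y\<in>V. \<Sum>z\<in>V. \<Sum>w\<in>V. of_bool (E (c x y z) w \<and> cl (c x y z) w = f x y z))
    \<le> real (card V) * (real (card V) * (real (card V) * 2))"
    using sum_class_neighbours_le_2 assms by (intro sum_bounded_above) auto
  then show ?thesis by (simp add: power3_eq_cube algebra_simps)
qed

private lemma sum4_class_neighbour_pair_le:
  "(\<Sum>t\<in>V. \<Sum>t'\<in>V. \<Sum>s\<in>V. \<Sum>s'\<in>V. of_bool (E s t' \<and> cl s t' = cl s t))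
    \<le> 2 * real (card V) ^ 3"
proof -
  let ?n = "real (card V)"
  have "(\<Sum>t\<in>V. \<Sum>t'\<in>V. \<Sum>s\<in>V. \<Sum>s'\<in>V. of_bool (E s t' \<and> cl s t' = cl s t))
      = (\<Sum>t\<in>V. \<Sum>t'\<in>V. \<Sum>s\<in>V. ?n * of_bool (E s t' \<and> cl s t' = cl s t))"
    by simp
  also have "\<dots> = ?n * (\<Sum>t\<in>V. \<Sum>s\<in>V. \<Sum>t'\<in>V. of_bool (E s t' \<and> cl s t' = cl s t))"
    by (simp only: sum_distrib_left) (rule sum.cong[OF refl], rule sum.swap)
  also have "\<dots> \<le> ?n * (?n * (?n * 2))"
    using sum_class_neighbours_le_2 by (intro mult_left_mono sum_bounded_above) auto
  finally show ?thesis by (simp add: power3_eq_cube algebra_simps)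
qed

lemma sum_codegree_energy_reorient_le:
  "(\<Sum>F\<in>Pow {..<m}. codegree_energy V (signed_adjacency (reorient R cl F)))
    \<le> 2 ^ m * (6 * real (card V) ^ 3)"
proof -
  let ?n = "real (card V)"
  let ?W = "\<lambda>t t' s s'. \<Sum>F\<in>Pow {..<m}.
    sign_flip F (cl s t) * sign_flip F (cl s t') * sign_flip F (cl s' t) * sign_flip F (cl s' t')"
  let ?B = "\<lambda>t t' s s'.
    signed_adjacency R s t * signed_adjacency R s t' * signed_adjacency R s' t * signed_adjacency R s' t'"
  let ?g1 = "\<lambda>t t' s s'. of_bool (E s t' \<and> cl s t' = cl s t) :: real"
  let ?g2 = "\<lambda>t t' s s'. of_bool (E t s' \<and> cl t s' = cl t s) :: real"
  let ?g3 = "\<lambda>t t' s s'. of_bool (E t' s' \<and> cl t' s' = cl s t) :: real"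
  have "(\<Sum>F\<in>Pow {..<m}. codegree_energy V (signed_adjacency (reorient R cl F)))
      = (\<Sum>t\<in>V. \<Sum>t'\<in>V. \<Sum>s\<in>V. \<Sum>s'\<in>V. ?W t t' s s' * ?B t t' s s')"
    unfolding codegree_energy_reorient sum_swap_nested4 by (simp only: sum_distrib_right)
  also have "\<dots> \<le> (\<Sum>t\<in>V. \<Sum>t'\<in>V. \<Sum>s\<in>V. \<Sum>s'\<in>V. 2 ^ m * (?g1 t t' s s' + ?g2 t t' s s' + ?g3 t t' s s'))"
    by (intro sum_mono sign_sum_times_adjacency_le)
  also have "\<dots> = 2 ^ m * ((\<Sum>t\<in>V. \<Sum>t'\<in>V. \<Sum>s\<in>V. \<Sum>s'\<in>V. ?g1 t t' s s') +
      (\<Sum>t\<in>V. \<Sum>t'\<in>V. \<Sum>s\<in>V. \<Sum>s'\<in>V. ?g2 t t' s s') + (\<Sum>t\<in>V. \<Sum>t'\<in>V. \<Sum>s\<in>V. \<Sum>s'\<in>V. ?g3 t t' s s'))"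
    by (simp only: sum_distrib_left[symmetric] sum.distrib)
  also have "\<dots> \<le> 2 ^ m * (6 * ?n ^ 3)"
  proof -
    have "(\<Sum>t\<in>V. \<Sum>t'\<in>V. \<Sum>s\<in>V. \<Sum>s'\<in>V. ?g1 t t' s s') \<le> 2 * ?n ^ 3"
      by (rule sum4_class_neighbour_pair_le)
    moreover have "(\<Sum>t\<in>V. \<Sum>t'\<in>V. \<Sum>s\<in>V. \<Sum>s'\<in>V. ?g2 t t' s s') \<le> 2 * ?n ^ 3"
      using sum4_class_neighbour_le[of "\<lambda>t t' s. t" "\<lambda>t t' s. cl t s"] by simp
    moreover have "(\<Sum>t\<in>V. \<Sum>t'\<in>V. \<Sum>s\<in>V. \<Sum>s'\<in>V. ?g3 t t' s s') \<le> 2 * ?n ^ 3"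
      using sum4_class_neighbour_le[of "\<lambda>t t' s. t'" "\<lambda>t t' s. cl s t"] by simp
    ultimately show ?thesis by (intro mult_left_mono) auto
  qed
  finally show ?thesis .
qed

lemma obtain_reorient_codegree_energy_le:
  obtains F where "codegree_energy V (signed_adjacency (reorient R cl F)) \<le> 6 * real (card V) ^ 3"
proof -
  have "(\<Sum>F\<in>Pow {..<m}. codegree_energy V (signed_adjacency (reorient R cl F)))
      \<le> real (card (Pow {..<m :: nat})) * (6 * real (card V) ^ 3)"
    using sum_codegree_energy_reorient_le by (simp add: card_Pow)
  then have "\<exists>F\<in>Pow {..<m}. codegree_energy V (signed_adjacency (reorient R cl F)) \<le> 6 * real (card V) ^ 3"
    by (intro exists_le_average) auto
  then show thesis using that by blast
qed

end

section \<open>Small discrepancy gives lower regularity\<close>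

lemma cut_sum_pow4_le:
  fixes A :: "'a \<Rightarrow> 'a \<Rightarrow> real"
  assumes "finite V" "S \<subseteq> V" "T \<subseteq> V"
  shows "(\<Sum>s\<in>S. \<Sum>t\<in>T. A s t) ^ 4 \<le> real (card V) ^ 4 * codegree_energy V A"
proof -
  let ?n = "real (card V)"
  let ?X = "\<lambda>s. \<Sum>t\<in>T. A s t"
  let ?Y = "\<lambda>(t, t'). \<Sum>s\<in>V. A s t * A s t'"
  define Q where "Q = (\<Sum>s\<in>V. (?X s)\<^sup>2)"
  have card_S: "real (card S) \<le> ?n" and card_T: "real (card T) \<le> ?n"
    using assms by (simp_all add: card_mono)
  have "(\<Sum>s\<in>S. ?X s)\<^sup>2 \<le> (\<Sum>s\<in>S. (?X s)\<^sup>2) * real (card S)"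
    by (rule sum_squared_le_sum_of_squares)
  also have "\<dots> \<le> Q * ?n"
    unfolding Q_def using assms card_S by (intro mult_mono sum_mono2) (auto simp: sum_nonneg)
  finally have step1: "(\<Sum>s\<in>S. ?X s)\<^sup>2 \<le> Q * ?n" .
  have "Q = (\<Sum>s\<in>V. \<Sum>t\<in>T. \<Sum>t'\<in>T. A s t * A s t')"
    unfolding Q_def power2_eq_square sum_product ..
  also have "\<dots> = (\<Sum>t\<in>T. \<Sum>t'\<in>T. \<Sum>s\<in>V. A s t * A s t')"
    by (subst sum.swap, rule sum.cong[OF refl], rule sum.swap)
  also have "\<dots> = (\<Sum>p\<in>T \<times> T. ?Y p)" by (rule sum.cartesian_product)
  finally have "Q\<^sup>2 = (\<Sum>p\<in>T \<times> T. ?Y p)\<^sup>2" by simp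
  also have "\<dots> \<le> (\<Sum>p\<in>T \<times> T. (?Y p)\<^sup>2) * real (card (T \<times> T))"
    by (rule sum_squared_le_sum_of_squares)
  also have "\<dots> \<le> (\<Sum>p\<in>V \<times> V. (?Y p)\<^sup>2) * ?n\<^sup>2"
  proof (rule mult_mono)
    show "(\<Sum>p\<in>T \<times> T. (?Y p)\<^sup>2) \<le> (\<Sum>p\<in>V \<times> V. (?Y p)\<^sup>2)"
      using assms by (intro sum_mono2) auto
    show "real (card (T \<times> T)) \<le> ?n\<^sup>2"
      using card_T by (simp add: card_cartesian_product power2_eq_square mult_mono)
  qed (auto simp: sum_nonneg)
  also have "(\<Sum>p\<in>V \<times> V. (?Y p)\<^sup>2) = codegree_energy V A"
    unfolding codegree_energy_def sum.cartesian_product by (rule sum.cong) auto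
  finally have step2: "Q\<^sup>2 \<le> codegree_energy V A * ?n\<^sup>2" .
  have "(\<Sum>s\<in>S. ?X s) ^ 4 = ((\<Sum>s\<in>S. ?X s)\<^sup>2)\<^sup>2" by simp
  also have "\<dots> \<le> (Q * ?n)\<^sup>2" by (rule power_mono[OF step1]) simp
  also have "\<dots> = Q\<^sup>2 * ?n\<^sup>2" by (simp add: power_mult_distrib)
  also have "\<dots> \<le> codegree_energy V A * ?n\<^sup>2 * ?n\<^sup>2" by (rule mult_right_mono[OF step2]) simp
  finally show ?thesis by (simp add: power_add[symmetric] algebra_simps)
qed

lemma e_count_eq_sum:
  assumes "finite S" "finite T"
  shows "real (e_count R S T) = (\<Sum>s\<in>S. \<Sum>t\<in>T. of_bool (R s t))"
proof -
  have "{(s, t). s \<in> S \<and> t \<in> T \<and> R s t} = Sigma S (\<lambda>s. {t\<in>T. R s t})" by auto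
  then have "e_count R S T = (\<Sum>s\<in>S. card {t\<in>T. R s t})"
    unfolding e_count_def using assms by simp
  then show ?thesis using assms(2) by (simp add: of_bool_def sum.inter_filter[symmetric])
qed

lemma e_count_orientation:
  assumes "orientation E D" "finite S" "finite T"
  shows "2 * real (e_count D S T) = real (e_count E S T) + (\<Sum>s\<in>S. \<Sum>t\<in>T. signed_adjacency D s t)"
proof -
  have "of_bool (E s t) = of_bool (D s t) + (of_bool (D t s) :: real)" for s t
    using assms(1) unfolding orientation_def by auto
  then show ?thesis
    unfolding e_count_eq_sum[OF assms(2,3)] signed_adjacency_def
    by (simp add: sum.distrib sum_subtractf sum_distrib_left[symmetric])
qed

text \<open>The constant \<open>96 = 16 \<cdot> 6\<close> makes \<open>6 n\<^sup>7 \<le> (p/2 \<cdot> \<epsilon>\<^sup>2 n\<^sup>2)\<^sup>4\<close>.\<close>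
lemma discrepancy_bound:
  fixes p eps n X P :: real
  assumes "X ^ 4 \<le> n ^ 4 * (6 * n ^ 3)" "96 / (p ^ 4 * eps ^ 8) \<le> n" "0 < p" "0 < eps"
    "eps\<^sup>2 * n\<^sup>2 \<le> P"
  shows "\<bar>X\<bar> \<le> p / 2 * P"
proof -
  let ?K = "p / 2 * eps\<^sup>2 * n\<^sup>2"
  have "0 < 96 / (p ^ 4 * eps ^ 8)" using assms(3,4) by simp
  then have "0 \<le> n" using assms(2) by linarith
  have "96 \<le> p ^ 4 * eps ^ 8 * n" using assms(2-4) by (simp add: divide_le_eq mult.commute)
  then have "96 * n ^ 7 \<le> (p ^ 4 * eps ^ 8 * n) * n ^ 7" by (rule mult_right_mono) (use \<open>0 \<le> n\<close> in simp)
  moreover have "?K ^ 4 = p ^ 4 * eps ^ 8 * n ^ 8 / 16"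
    by (simp add: power_mult_distrib power_divide flip: power_mult)
  moreover have "(p ^ 4 * eps ^ 8 * n) * n ^ 7 = p ^ 4 * eps ^ 8 * n ^ 8"
    by (simp add: mult.assoc flip: power_Suc)
  moreover have "n ^ 4 * (6 * n ^ 3) = 6 * n ^ 7" by (simp add: algebra_simps flip: power_add)
  ultimately have "X ^ 4 \<le> ?K ^ 4" using assms(1) by linarith
  then have "\<bar>X\<bar> ^ 4 \<le> ?K ^ 4" by (simp add: power_even_abs)
  moreover have "0 \<le> ?K" using assms(3) by simp
  ultimately have "\<bar>X\<bar> \<le> ?K" using power_mono_iff[of "\<bar>X\<bar>" ?K 4] by simp
  also have "\<dots> \<le> p / 2 * P" using assms(3,5) by (simp add: mult.assoc)
  finally show ?thesis .
qed

lemma lower_regular_orientation_of_energy: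
  assumes D: "orientation E D" and reg: "lower_regular V E p eps" and "finite V" "0 < p" "0 < eps"
    and n: "96 / (p ^ 4 * eps ^ 8) \<le> real (card V)"
    and energy: "codegree_energy V (signed_adjacency D) \<le> 6 * real (card V) ^ 3"
  shows "lower_regular V D (p / 4) eps"
  unfolding lower_regular_def
proof (intro allI impI)
  fix S T assume S: "S \<subseteq> V" and T: "T \<subseteq> V" and "S \<inter> T = {}"
    and cS: "eps * real (card V) \<le> real (card S)" and cT: "eps * real (card V) \<le> real (card T)"
  let ?n = "real (card V)" and ?P = "real (card S) * real (card T)"
  let ?X = "\<Sum>s\<in>S. \<Sum>t\<in>T. signed_adjacency D s t"
  have fin: "finite S" "finite T" using S T \<open>finite V\<close> finite_subset by auto
  have "?X ^ 4 \<le> ?n ^ 4 * codegree_energy V (signed_adjacency D)"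
    by (rule cut_sum_pow4_le[OF \<open>finite V\<close> S T])
  also have "\<dots> \<le> ?n ^ 4 * (6 * ?n ^ 3)" by (rule mult_left_mono[OF energy]) simp
  finally have "?X ^ 4 \<le> ?n ^ 4 * (6 * ?n ^ 3)" .
  moreover have "eps\<^sup>2 * ?n\<^sup>2 \<le> ?P"
    using mult_mono[OF cS cT] \<open>0 < eps\<close> by (simp add: power2_eq_square algebra_simps)
  ultimately have "\<bar>?X\<bar> \<le> p / 2 * ?P" using discrepancy_bound n \<open>0 < p\<close> \<open>0 < eps\<close> by blast
  moreover have "(p - eps) * ?P \<le> real (e_count E S T)"
    using reg S T \<open>S \<inter> T = {}\<close> cS cT unfolding lower_regular_def by (simp add: mult.assoc)
  moreover have "2 * real (e_count D S T) = real (e_count E S T) + ?X"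
    by (rule e_count_orientation[OF D fin])
  moreover have "0 \<le> eps * ?P" using \<open>0 < eps\<close> by simp
  ultimately have "(p / 4 - eps) * ?P \<le> real (e_count D S T)"
    by (simp add: algebra_simps)
  then show "(p / 4 - eps) * real (card S) * real (card T) \<le> real (e_count D S T)"
    by (simp add: mult.assoc)
qed

lemma eulerian_lower_regular_orientation:
  assumes g: "graph V E" and even: "\<forall>v\<in>V. even (degree V E v)"
    and reg: "lower_regular V E p eps" and "0 < p" "0 < eps"
    and n: "96 / (p ^ 4 * eps ^ 8) \<le> real (card V)"
  shows "\<exists>D. orientation E D \<and> (\<forall>v\<in>V. out_degree V D v = in_degree V D v) \<and>
    lower_regular V D (p / 4) eps"
proof -
  have fin: "finite V" using g unfolding graph_def by blast
  obtain R cl m where dec: "cycle_decomposition V E R cl m"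
    using cycle_decomposition_exists[OF g even] by blast
  obtain F where energy: "codegree_energy V (signed_adjacency (reorient R cl F)) \<le> 6 * real (card V) ^ 3"
    using obtain_reorient_codegree_energy_le[OF fin dec] by blast
  have "orientation E (reorient R cl F)" by (rule orientation_reorient[OF dec])
  moreover have "\<forall>v\<in>V. out_degree V (reorient R cl F) v = in_degree V (reorient R cl F) v"
    using reorient_out_degree_eq_in_degree[OF dec fin] by blast
  moreover have "lower_regular V (reorient R cl F) (p / 4) eps"
    using lower_regular_orientation_of_energy[OF _ reg fin \<open>0 < p\<close> \<open>0 < eps\<close> n energy] calculation(1) by blast
  ultimately show ?thesis by blast
qed

theorem lemma3p11:
  fixes p \<alpha> :: real
  assumes "0 < p" "p < 1" "0 < \<alpha>" "\<alpha> < 1"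
  shows "\<exists>eps0 > 0. \<forall>eps. 0 < eps \<and> eps \<le> eps0 \<longrightarrow>
    (\<exists>n0 :: nat. \<forall>(V :: nat set) E.
       graph V E \<and> card V \<ge> n0 \<and>
       (\<forall>v \<in> V. even (degree V E v)) \<and>
       lower_regular V E p eps \<and>
       (\<forall>v \<in> V. real (degree V E v) \<ge> \<alpha> * real (card V)) \<longrightarrow>
       (\<exists>D. orientation E D \<and>
            (\<forall>v \<in> V. out_degree V D v = in_degree V D v) \<and>
            lower_regular V D (p / 4) eps))"
proof (intro exI[of _ "1::real"] conjI allI impI)
  show "(0::real) < 1" by simp
  fix eps :: real assume eps: "0 < eps \<and> eps \<le> 1"
  let ?n0 = "nat \<lceil>96 / (p ^ 4 * eps ^ 8)\<rceil>"
  show "\<exists>n0 :: nat. \<forall>(V :: nat set) E.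
       graph V E \<and> card V \<ge> n0 \<and> (\<forall>v \<in> V. even (degree V E v)) \<and> lower_regular V E p eps \<and>
       (\<forall>v \<in> V. real (degree V E v) \<ge> \<alpha> * real (card V)) \<longrightarrow>
       (\<exists>D. orientation E D \<and> (\<forall>v \<in> V. out_degree V D v = in_degree V D v) \<and>
            lower_regular V D (p / 4) eps)"
  proof (intro exI[of _ ?n0] allI impI)
    fix V :: "nat set" and E
    assume h: "graph V E \<and> ?n0 \<le> card V \<and> (\<forall>v \<in> V. even (degree V E v)) \<and> lower_regular V E p eps \<and>
       (\<forall>v \<in> V. real (degree V E v) \<ge> \<alpha> * real (card V))"
    have "96 / (p ^ 4 * eps ^ 8) \<le> real ?n0" by (rule real_nat_ceiling_ge)
    also have "\<dots> \<le> real (card V)" using h by linarith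
    finally show "\<exists>D. orientation E D \<and> (\<forall>v \<in> V. out_degree V D v = in_degree V D v) \<and>
        lower_regular V D (p / 4) eps"
      using eulerian_lower_regular_orientation assms(1) eps h by blast
  qed
qed

end
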